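(* Let $X$ be a finite simplicial complex and $d\ge 0$. Put $r_d=\dim(\operatorname{im}(B_d^\intercal))$, $r_{d+1}=\dim(\operatorname{im}(B_{d+1}))$ and $n_d=\dim(C_d(X))$. Consider vector fields on $C_d(X)$ of the form $$\theta\mapsto B_d^\intercal F^{\downarrow}(B_d\theta)+B_{d+1}F^{\uparrow}(B_{d+1}^\intercal\theta),\qquad (\ast)$$ where $F^{\downarrow}:C_{d-1}(X)\to C_{d-1}(X)$ and $F^{\uparrow}:C_{d+1}(X)\to C_{d+1}(X)$ are arbitrary (nonlinear) maps. The conjugacy classes of all systems of the form $(\ast)$ are exactly the $(r_d,r_{d+1},n_d)$-vector fields. More specifically, every vector field of the form $(\ast)$ is conjugate to an $(r_d,r_{d+1},n_d)$-vector field; conversely, any $(r_d,r_{d+1},n_d)$-vector field is conjugate to a vector field of the form $(\ast)$ for some choice of $F^{\downarrow},F^{\uparrow}$.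
   Context: A finite simplicial complex $X$ on vertex set $\{1,\dots,n\}$ is a collection of nonempty subsets of $\{1,\dots,n\}$ closed under taking nonempty subsets; $X_d$ is the set of its simplices with $d+1$ elements. A $d$-simplex with vertices $i_0<\dots<i_d$ is written $[i_0,\dots,i_d]$. $C_d(X)$ is the real vector space with basis $X_d$ and the inner product making $X_d$ orthonormal ($C_d(X)=0$ if $X_d=\emptyset$; in particular $C_{-1}(X)=0$). The boundary map $\partial_d:C_d(X)\to C_{d-1}(X)$ is $\partial_d[i_0,\dots,i_d]=\sum_{k=0}^d(-1)^k[i_0,\dots,\widehat{i_k},\dots,i_d]$ (vertex $i_k$ omitted), and $B_d$ is its matrix with respect to fixed orderings of the bases $X_d$, $X_{d-1}$; $B_d^\intercal$ is its transpose. A map $H:\mathbb{R}^n\to\mathbb{R}^n$ is an $(\alpha,\beta,n)$-vector field ($\alpha+\beta\le n$) if there exist $H_1:\mathbb{R}^\alpha\to\mathbb{R}^\alpha$ and $H_2:\mathbb{R}^\beta\to\mathbb{R}^\beta$ with $H=H_1\oplus H_2\oplus H_3$ with respect to $\mathbb{R}^n=\mathbb{R}^\alpha\oplus\mathbb{R}^\beta\oplus\mathbb{R}^{n-\alpha-\beta}$, where $H_3$ is the zero map on $\mathbb{R}^{n-\alpha-\beta}$. Two vector fields $G$ on $U$ and $H$ on $V$ are conjugate if there is an invertible linear map $M:U\to V$ with $G(x)=M^{-1}H(Mx)$ for all $x$. *)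

theory Defs
  imports "Jordan_Normal_Form.DL_Rank"
begin

definition simplicial_complex :: "nat \<Rightarrow> nat set set \<Rightarrow> bool" where
  "simplicial_complex n X \<longleftrightarrow>
     (\<forall>S\<in>X. S \<noteq> {} \<and> S \<subseteq> {1..n}) \<and>
     (\<forall>S\<in>X. \<forall>T. T \<noteq> {} \<and> T \<subseteq> S \<longrightarrow> T \<in> X)"

(* simplices with exactly k vertices; X_d = simplices_card X (d+1) *)
definition simplices_card :: "nat set set \<Rightarrow> nat \<Rightarrow> nat set set" where
  "simplices_card X k = {S\<in>X. card S = k}"

(* coefficient of tau in the boundary of sigma:
   sigma = [i_0,...,i_d], tau = sigma with i_k removed gives (-1)^k, where
   k = number of vertices of sigma smaller than the omitted vertex *)
definition boundary_coeff :: "nat set \<Rightarrow> nat set \<Rightarrow> real" where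
  "boundary_coeff \<tau> \<sigma> =
     (if \<exists>v\<in>\<sigma>. \<tau> = \<sigma> - {v}
      then (-1) ^ card {w\<in>\<sigma>. w < (THE v. v \<in> \<sigma> \<and> \<tau> = \<sigma> - {v})}
      else 0)"

(* matrix of the boundary map C_d -> C_{d-1} w.r.t. orderings Lrow of X_{d-1} and Lcol of X_d *)
definition boundary_matrix :: "nat set list \<Rightarrow> nat set list \<Rightarrow> real mat" where
  "boundary_matrix Lrow Lcol =
     mat (length Lrow) (length Lcol) (\<lambda>(i, j). boundary_coeff (Lrow ! i) (Lcol ! j))"

definition dim_im :: "real mat \<Rightarrow> nat" where
  "dim_im A = vec_space.rank (dim_row A) A"

definition ab_vector_field :: "nat \<Rightarrow> nat \<Rightarrow> nat \<Rightarrow> (real vec \<Rightarrow> real vec) \<Rightarrow> bool" where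
  "ab_vector_field \<alpha> \<beta> n H \<longleftrightarrow> \<alpha> + \<beta> \<le> n \<and>
     (\<exists>H1 H2. (\<forall>x\<in>carrier_vec \<alpha>. H1 x \<in> carrier_vec \<alpha>) \<and>
              (\<forall>y\<in>carrier_vec \<beta>. H2 y \<in> carrier_vec \<beta>) \<and>
              (\<forall>x\<in>carrier_vec n. H x =
                  vec n (\<lambda>i. if i < \<alpha> then H1 (vec \<alpha> (\<lambda>j. x $ j)) $ i
                             else if i < \<alpha> + \<beta> then H2 (vec \<beta> (\<lambda>j. x $ (\<alpha> + j))) $ (i - \<alpha>)
                             else 0)))"

definition conjugate_vf :: "nat \<Rightarrow> (real vec \<Rightarrow> real vec) \<Rightarrow> nat \<Rightarrow> (real vec \<Rightarrow> real vec) \<Rightarrow> bool" where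
  "conjugate_vf m G n H \<longleftrightarrow>
     (\<exists>M \<in> carrier_mat n m. \<exists>Minv \<in> carrier_mat m n.
        M * Minv = 1\<^sub>m n \<and> Minv * M = 1\<^sub>m m \<and>
        (\<forall>x\<in>carrier_vec m. G x = Minv *\<^sub>v H (M *\<^sub>v x)))"

definition hodge_field :: "real mat \<Rightarrow> real mat \<Rightarrow> (real vec \<Rightarrow> real vec) \<Rightarrow> (real vec \<Rightarrow> real vec)
    \<Rightarrow> real vec \<Rightarrow> real vec" where
  "hodge_field Bd Bd1 Fdown Fup \<theta> =
     transpose_mat Bd *\<^sub>v Fdown (Bd *\<^sub>v \<theta>) + Bd1 *\<^sub>v Fup (transpose_mat Bd1 *\<^sub>v \<theta>)"

end

theory Submission
  imports Defs "Jordan_Normal_Form.Schur_Decomposition"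
begin

text \<open>
  Since the boundary of a boundary vanishes, the images of \<open>B\<^sub>d\<^sup>T\<close> and \<open>B\<^sub>d\<^sub>+\<^sub>1\<close> are
  orthogonal subspaces of \<open>C\<^sub>d(X)\<close>. Gram-Schmidt therefore yields an orthogonal basis of
  \<open>C\<^sub>d(X)\<close> made of a basis of \<open>im B\<^sub>d\<^sup>T\<close> (\<open>r\<^sub>d\<close> vectors), a basis of \<open>im B\<^sub>d\<^sub>+\<^sub>1\<close>
  (\<open>r\<^sub>d\<^sub>+\<^sub>1\<close> vectors) and a basis of the orthogonal complement of their sum. Writing
  \<open>\<theta> = (a, b, c)\<close> in this basis, \<open>B\<^sub>d \<theta>\<close> depends only on \<open>a\<close>, and injectively so, while
  \<open>B\<^sub>d\<^sub>+\<^sub>1\<^sup>T \<theta>\<close> depends only on \<open>b\<close>, again injectively; moreover the two summands of \<open>(\<star>)\<close>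
  lie in the first and in the second block of the basis. So in these coordinates \<open>(\<star>)\<close>
  becomes \<open>H\<^sub>1 \<oplus> H\<^sub>2 \<oplus> 0\<close>, and conversely any \<open>H\<^sub>1\<close>, \<open>H\<^sub>2\<close> arise this way: by
  injectivity, \<open>F\<^sup>\<down>\<close> and \<open>F\<^sup>\<up>\<close> can be prescribed freely on the images of \<open>a \<mapsto> B\<^sub>d \<theta>\<close> and
  \<open>b \<mapsto> B\<^sub>d\<^sub>+\<^sub>1\<^sup>T \<theta>\<close>.
\<close>

lemma boundary_coeff_remove:
  assumes "v \<in> \<sigma>"
  shows "boundary_coeff (\<sigma> - {v}) \<sigma> = (-1) ^ card {w\<in>\<sigma>. w < v}"
proof -
  have "(THE u. u \<in> \<sigma> \<and> \<sigma> - {v} = \<sigma> - {u}) = v"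
    by (rule the_equality) (use assms in auto)
  then show ?thesis
    using assms unfolding boundary_coeff_def by auto
qed

lemma boundary_coeff_nonzero:
  assumes "boundary_coeff \<tau> \<sigma> \<noteq> 0"
  shows "\<exists>v\<in>\<sigma>. \<tau> = \<sigma> - {v}"
  using assms unfolding boundary_coeff_def by (auto split: if_splits)

lemma boundary_coeff_two_step_cancel:
  assumes v: "v \<in> \<sigma>" and w: "w \<in> \<sigma>" and "v < w"
  shows "boundary_coeff (\<sigma> - {v} - {w}) (\<sigma> - {v}) * boundary_coeff (\<sigma> - {v}) \<sigma>
       + boundary_coeff (\<sigma> - {w} - {v}) (\<sigma> - {w}) * boundary_coeff (\<sigma> - {w}) \<sigma> = 0"
proof -
  define j where "j = card {x\<in>\<sigma> - {v}. x < w}"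
  have "finite {x\<in>\<sigma>. x < w}"
    by (rule finite_subset[of _ "{..<w}"]) auto
  moreover have "v \<in> {x\<in>\<sigma>. x < w}"
    using v \<open>v < w\<close> by simp
  moreover have "{x\<in>\<sigma>. x < w} - {v} = {x\<in>\<sigma> - {v}. x < w}"
    by auto
  ultimately have card_w: "card {x\<in>\<sigma>. x < w} = Suc j"
    unfolding j_def by (metis card.remove)
  have "{x\<in>\<sigma> - {w}. x < v} = {x\<in>\<sigma>. x < v}"
    using \<open>v < w\<close> by auto
  then have "boundary_coeff (\<sigma> - {w} - {v}) (\<sigma> - {w}) = boundary_coeff (\<sigma> - {v}) \<sigma>"
    using v w \<open>v < w\<close> by (simp add: boundary_coeff_remove)
  moreover have "boundary_coeff (\<sigma> - {v} - {w}) (\<sigma> - {v}) = (-1) ^ j"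
    unfolding j_def using w \<open>v < w\<close> by (intro boundary_coeff_remove) simp
  moreover have "boundary_coeff (\<sigma> - {w}) \<sigma> = - ((-1) ^ j)"
    using boundary_coeff_remove[OF w] card_w by simp
  ultimately show ?thesis
    by simp
qed

lemma boundary_coeff_mult_nonzero:
  assumes "boundary_coeff \<rho> \<tau> * boundary_coeff \<tau> \<sigma> \<noteq> 0"
  obtains x y where "x \<in> \<sigma>" "y \<in> \<sigma>" "x \<noteq> y" "\<tau> = \<sigma> - {x}" "\<rho> = \<sigma> - {x} - {y}"
proof -
  from assms have "boundary_coeff \<tau> \<sigma> \<noteq> 0" "boundary_coeff \<rho> \<tau> \<noteq> 0"
    by auto
  from boundary_coeff_nonzero[OF this(1)] obtain x where x: "x \<in> \<sigma>" "\<tau> = \<sigma> - {x}" ..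
  from boundary_coeff_nonzero[OF \<open>boundary_coeff \<rho> \<tau> \<noteq> 0\<close>]
  obtain y where "y \<in> \<tau>" "\<rho> = \<tau> - {y}" ..
  with x have y: "y \<in> \<sigma>" "x \<noteq> y" "\<rho> = \<sigma> - {x} - {y}"
    by auto
  show thesis
    using x(1) y(1,2) x(2) y(3) by (rule that)
qed

lemma boundary_coeff_sum_eq_zero:
  assumes "finite T" and faces: "(\<lambda>v. \<sigma> - {v}) ` \<sigma> \<subseteq> T"
  shows "(\<Sum>\<tau>\<in>T. boundary_coeff \<rho> \<tau> * boundary_coeff \<tau> \<sigma>) = 0"
proof -
  let ?f = "\<lambda>\<tau>. boundary_coeff \<rho> \<tau> * boundary_coeff \<tau> \<sigma>"
  show ?thesis
  proof (cases "\<exists>v\<in>\<sigma>. \<exists>w\<in>\<sigma>. v < w \<and> \<rho> = \<sigma> - {v} - {w}")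
    case True
    then obtain v w where vw: "v \<in> \<sigma>" "w \<in> \<sigma>" "v < w" and \<rho>: "\<rho> = \<sigma> - {v} - {w}"
      by blast
    have "?f \<tau> = 0" if "\<tau> \<in> T - {\<sigma> - {v}, \<sigma> - {w}}" for \<tau>
    proof (rule ccontr)
      assume "?f \<tau> \<noteq> 0"
      then obtain x y where "x \<in> \<sigma>" "y \<in> \<sigma>" "x \<noteq> y" "\<tau> = \<sigma> - {x}" "\<rho> = \<sigma> - {x} - {y}"
        by (rule boundary_coeff_mult_nonzero)
      then have "x \<notin> \<sigma> - {v} - {w}"
        using \<rho> by simp
      then have "x = v \<or> x = w"
        using \<open>x \<in> \<sigma>\<close> by simp
      then show False
        using that \<open>\<tau> = \<sigma> - {x}\<close> by auto
    qed
    then have "(\<Sum>\<tau>\<in>T. ?f \<tau>) = (\<Sum>\<tau>\<in>{\<sigma> - {v}, \<sigma> - {w}}. ?f \<tau>)"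
      using faces vw \<open>finite T\<close> by (intro sum.mono_neutral_right) auto
    also have "\<dots> = ?f (\<sigma> - {v}) + ?f (\<sigma> - {w})"
      using vw by (subst sum.insert) auto
    also have "\<dots> = 0"
    proof -
      have "\<rho> = \<sigma> - {w} - {v}"
        using \<rho> by auto
      then show ?thesis
        using boundary_coeff_two_step_cancel[OF vw] \<rho> by simp
    qed
    finally show ?thesis .
  next
    case False
    have "?f \<tau> = 0" for \<tau>
    proof (rule ccontr)
      assume "?f \<tau> \<noteq> 0"
      then obtain x y where xy: "x \<in> \<sigma>" "y \<in> \<sigma>" "x \<noteq> y" "\<tau> = \<sigma> - {x}"
        and \<rho>: "\<rho> = \<sigma> - {x} - {y}"
        by (rule boundary_coeff_mult_nonzero)
      have "\<rho> = \<sigma> - {y} - {x}"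
        using \<rho> by auto
      consider "x < y" | "y < x"
        using \<open>x \<noteq> y\<close> by linarith
      then show False
        using False xy \<rho> \<open>\<rho> = \<sigma> - {y} - {x}\<close> by cases metis+
    qed
    then show ?thesis by simp
  qed
qed

lemma face_in_simplices_card:
  assumes X: "simplicial_complex n X" and \<sigma>: "\<sigma> \<in> simplices_card X (d + 2)" and "v \<in> \<sigma>"
  shows "\<sigma> - {v} \<in> simplices_card X (d + 1)"
proof -
  have "\<sigma> \<in> X" "card \<sigma> = d + 2"
    using \<sigma> unfolding simplices_card_def by auto
  then have card: "card (\<sigma> - {v}) = d + 1"
    using \<open>v \<in> \<sigma>\<close> by (simp add: card_ge_0_finite)
  then have "\<sigma> - {v} \<noteq> {}"
    by (metis add_is_0 card.empty one_neq_zero)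
  moreover have "\<forall>S\<in>X. \<forall>T. T \<noteq> {} \<and> T \<subseteq> S \<longrightarrow> T \<in> X"
    using X unfolding simplicial_complex_def by (rule conjunct2)
  ultimately have "\<sigma> - {v} \<in> X"
    using \<open>\<sigma> \<in> X\<close> by (meson Diff_subset)
  then show ?thesis
    using card unfolding simplices_card_def by simp
qed

lemma boundary_matrix_mult_eq_zero:
  assumes X: "simplicial_complex n X" and "distinct Ld"
    and Ld: "set Ld = simplices_card X (d + 1)" and Lp: "set Lp = simplices_card X (d + 2)"
  shows "boundary_matrix Lm Ld * boundary_matrix Ld Lp = 0\<^sub>m (length Lm) (length Lp)"
proof (rule eq_matI)
  fix i k
  assume "i < dim_row (0\<^sub>m (length Lm) (length Lp))" "k < dim_col (0\<^sub>m (length Lm) (length Lp))"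
  then have i: "i < length Lm" and k: "k < length Lp" by auto
  have "(boundary_matrix Lm Ld * boundary_matrix Ld Lp) $$ (i, k)
      = (\<Sum>j<length Ld. boundary_coeff (Lm ! i) (Ld ! j) * boundary_coeff (Ld ! j) (Lp ! k))"
    using i k by (simp add: boundary_matrix_def scalar_prod_def lessThan_atLeast0)
  also have "\<dots> = (\<Sum>\<tau>\<in>set Ld. boundary_coeff (Lm ! i) \<tau> * boundary_coeff \<tau> (Lp ! k))"
    using \<open>distinct Ld\<close> by (simp add: sum.distinct_set_conv_list sum_list_sum_nth atLeast0LessThan)
  also have "\<dots> = 0"
  proof (rule boundary_coeff_sum_eq_zero)
    have "Lp ! k \<in> simplices_card X (d + 2)"
      using nth_mem[OF k] Lp by simp
    then show "(\<lambda>v. Lp ! k - {v}) ` (Lp ! k) \<subseteq> set Ld"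
      unfolding Ld by (intro image_subsetI face_in_simplices_card[OF X])
  qed simp
  finally show "(boundary_matrix Lm Ld * boundary_matrix Ld Lp) $$ (i, k)
      = 0\<^sub>m (length Lm) (length Lp) $$ (i, k)"
    using i k by simp
qed (auto simp: boundary_matrix_def)

lemma all_carrier_vec_blocks:
  assumes "\<alpha> + \<beta> \<le> n"
  shows "(\<forall>x\<in>carrier_vec n. P x) \<longleftrightarrow>
    (\<forall>a\<in>carrier_vec \<alpha>. \<forall>b\<in>carrier_vec \<beta>. \<forall>c\<in>carrier_vec (n - \<alpha> - \<beta>). P (a @\<^sub>v b @\<^sub>v c))"
proof -
  have n: "carrier_vec n = carrier_vec (\<alpha> + (\<beta> + (n - \<alpha> - \<beta>)))"
    using assms by (simp add: add.assoc)
  show ?thesis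
    by (simp only: n all_vec_append)
qed

lemma ab_vector_field_iff_blocks:
  "ab_vector_field \<alpha> \<beta> n H \<longleftrightarrow> \<alpha> + \<beta> \<le> n \<and>
     (\<exists>H1 H2. (\<forall>x\<in>carrier_vec \<alpha>. H1 x \<in> carrier_vec \<alpha>) \<and> (\<forall>y\<in>carrier_vec \<beta>. H2 y \<in> carrier_vec \<beta>) \<and>
       (\<forall>a\<in>carrier_vec \<alpha>. \<forall>b\<in>carrier_vec \<beta>. \<forall>c\<in>carrier_vec (n - \<alpha> - \<beta>).
          H (a @\<^sub>v b @\<^sub>v c) = H1 a @\<^sub>v H2 b @\<^sub>v 0\<^sub>v (n - \<alpha> - \<beta>)))"
proof (cases "\<alpha> + \<beta> \<le> n")
  case True
  have "(\<forall>x\<in>carrier_vec n. H x = vec n (\<lambda>i. if i < \<alpha> then H1 (vec \<alpha> (\<lambda>j. x $ j)) $ i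
          else if i < \<alpha> + \<beta> then H2 (vec \<beta> (\<lambda>j. x $ (\<alpha> + j))) $ (i - \<alpha>) else 0))
      \<longleftrightarrow> (\<forall>a\<in>carrier_vec \<alpha>. \<forall>b\<in>carrier_vec \<beta>. \<forall>c\<in>carrier_vec (n - \<alpha> - \<beta>).
        H (a @\<^sub>v b @\<^sub>v c) = H1 a @\<^sub>v H2 b @\<^sub>v 0\<^sub>v (n - \<alpha> - \<beta>))"
    if H1: "\<forall>x\<in>carrier_vec \<alpha>. H1 x \<in> carrier_vec \<alpha>" and H2: "\<forall>y\<in>carrier_vec \<beta>. H2 y \<in> carrier_vec \<beta>"
    for H1 H2 :: "real vec \<Rightarrow> real vec"
  proof -
    have blocks: "vec n (\<lambda>i. if i < \<alpha> then H1 (vec \<alpha> (\<lambda>j. (a @\<^sub>v b @\<^sub>v c) $ j)) $ i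
        else if i < \<alpha> + \<beta> then H2 (vec \<beta> (\<lambda>j. (a @\<^sub>v b @\<^sub>v c) $ (\<alpha> + j))) $ (i - \<alpha>) else 0)
      = H1 a @\<^sub>v H2 b @\<^sub>v 0\<^sub>v (n - \<alpha> - \<beta>)"
      if "a \<in> carrier_vec \<alpha>" "b \<in> carrier_vec \<beta>" "c \<in> carrier_vec (n - \<alpha> - \<beta>)" for a b c
    proof -
      have "vec \<alpha> (\<lambda>j. (a @\<^sub>v b @\<^sub>v c) $ j) = a" "vec \<beta> (\<lambda>j. (a @\<^sub>v b @\<^sub>v c) $ (\<alpha> + j)) = b"
        using that by (auto intro!: eq_vecI)
      moreover have "H1 a \<in> carrier_vec \<alpha>" "H2 b \<in> carrier_vec \<beta>"
        using that H1 H2 by auto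
      ultimately show ?thesis
        using that True by (intro eq_vecI) auto
    qed
    show ?thesis
      unfolding all_carrier_vec_blocks[OF True] by (intro ball_cong refl) (simp only: blocks)
  qed
  then show ?thesis
    unfolding ab_vector_field_def using True by blast
next
  case False
  then show ?thesis
    unfolding ab_vector_field_def by simp
qed

lemma conjugate_vf_sym:
  assumes "conjugate_vf m G n H" and "\<forall>y\<in>carrier_vec n. H y \<in> carrier_vec n"
  shows "conjugate_vf n H m G"
proof -
  obtain M Minv where M: "M \<in> carrier_mat n m" and Minv: "Minv \<in> carrier_mat m n"
    and MMinv: "M * Minv = 1\<^sub>m n" and MinvM: "Minv * M = 1\<^sub>m m"
    and G: "\<forall>x\<in>carrier_vec m. G x = Minv *\<^sub>v H (M *\<^sub>v x)"
    using assms(1) unfolding conjugate_vf_def by blast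
  have "H y = M *\<^sub>v G (Minv *\<^sub>v y)" if y: "y \<in> carrier_vec n" for y
  proof -
    have "M *\<^sub>v (Minv *\<^sub>v y) = y"
      using y M Minv MMinv by (metis assoc_mult_mat_vec one_mult_mat_vec)
    then have "M *\<^sub>v G (Minv *\<^sub>v y) = M *\<^sub>v (Minv *\<^sub>v H y)"
      using G Minv y by simp
    also have "\<dots> = H y"
      using assms(2) y M Minv MMinv by (metis assoc_mult_mat_vec one_mult_mat_vec)
    finally show ?thesis by simp
  qed
  then show ?thesis
    unfolding conjugate_vf_def using M Minv MMinv MinvM by blast
qed

lemma inj_on_factor:
  assumes inj: "inj_on f A" and g: "\<forall>a\<in>A. g a \<in> Z" and "z0 \<in> Z"
  shows "\<exists>F. (\<forall>y. F y \<in> Z) \<and> (\<forall>a\<in>A. F (f a) = g a)"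
proof -
  define F where "F y = (if y \<in> f ` A then g (inv_into A f y) else z0)" for y
  have "F y \<in> Z" for y
  proof (cases "y \<in> f ` A")
    case True
    then show ?thesis
      unfolding F_def using g inv_into_into[OF True] by simp
  qed (simp add: F_def \<open>z0 \<in> Z\<close>)
  moreover have "F (f a) = g a" if "a \<in> A" for a
    unfolding F_def using that inv_into_f_f[OF inj that] by simp
  ultimately show ?thesis
    by blast
qed

lemma image_eq_choice:
  assumes eq: "f ` A = g ` B" and u: "\<forall>x\<in>X. u x \<in> A"
  shows "\<exists>v. \<forall>x\<in>X. v x \<in> B \<and> f (u x) = g (v x)"
proof (rule bchoice, rule ballI)
  fix x
  assume "x \<in> X"
  then have "f (u x) \<in> g ` B"
    using u unfolding eq[symmetric] by blast
  then show "\<exists>b. b \<in> B \<and> f (u x) = g b"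
    by blast
qed

lemma zero_mult_mat_vec:
  assumes "v \<in> carrier_vec nc"
  shows "0\<^sub>m nr nc *\<^sub>v v = (0\<^sub>v nr :: 'a :: semiring_0 vec)"
  using assms by (intro eq_vecI) (simp_all add: scalar_prod_left_zero)

lemma mult_mat_vec_zero:
  assumes "A \<in> carrier_mat nr nc"
  shows "A *\<^sub>v 0\<^sub>v nc = (0\<^sub>v nr :: 'a :: semiring_0 vec)"
  using assms by (intro eq_vecI) (simp_all add: scalar_prod_right_zero)

lemma mat_of_cols_mult_vec_carrier [simp]: "mat_of_cols n vs *\<^sub>v v \<in> carrier_vec n"
  by (rule carrier_vecI) simp

lemma mat_of_cols_append_mult_vec:
  assumes "a \<in> carrier_vec (length us)" and "b \<in> carrier_vec (length ws)"
  shows "mat_of_cols n (us @ ws) *\<^sub>v (a @\<^sub>v b) = mat_of_cols n us *\<^sub>v a + mat_of_cols n ws *\<^sub>v b"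
proof (rule eq_vecI)
  fix i
  assume "i < dim_vec (mat_of_cols n us *\<^sub>v a + mat_of_cols n ws *\<^sub>v b)"
  then have i: "i < n" by simp
  have "row (mat_of_cols n (us @ ws)) i = row (mat_of_cols n us) i @\<^sub>v row (mat_of_cols n ws) i"
    using i by (intro eq_vecI) (auto simp: mat_of_cols_index nth_append)
  then show "(mat_of_cols n (us @ ws) *\<^sub>v (a @\<^sub>v b)) $ i
      = (mat_of_cols n us *\<^sub>v a + mat_of_cols n ws *\<^sub>v b) $ i"
    using i assms by (simp add: scalar_prod_append[of _ "length us" _ "length ws"])
qed simp

lemma corthogonal_iff_distinct:
  "corthogonal vs \<longleftrightarrow> distinct vs \<and> (\<forall>x\<in>set vs. \<forall>y\<in>set vs. x \<bullet>c y = 0 \<longleftrightarrow> x \<noteq> y)"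
proof
  assume orth: "corthogonal vs"
  then have dist: "distinct vs"
    by (rule corthogonal_distinct)
  show "distinct vs \<and> (\<forall>x\<in>set vs. \<forall>y\<in>set vs. x \<bullet>c y = 0 \<longleftrightarrow> x \<noteq> y)"
  proof (intro conjI dist ballI)
    fix x y
    assume "x \<in> set vs" "y \<in> set vs"
    then obtain i j where "i < length vs" "j < length vs" "x = vs ! i" "y = vs ! j"
      by (metis in_set_conv_nth)
    then show "x \<bullet>c y = 0 \<longleftrightarrow> x \<noteq> y"
      using corthogonalD[OF orth] nth_eq_iff_index_eq[OF dist] by simp
  qed
next
  assume "distinct vs \<and> (\<forall>x\<in>set vs. \<forall>y\<in>set vs. x \<bullet>c y = 0 \<longleftrightarrow> x \<noteq> y)"
  then show "corthogonal vs"
    using nth_eq_iff_index_eq by (intro corthogonalI) auto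
qed

lemma corthogonal_append:
  fixes us ws :: "real vec list"
  assumes "corthogonal us" and "corthogonal ws"
    and cross: "\<forall>u\<in>set us. \<forall>w\<in>set ws. u \<bullet> w = 0"
    and "set us \<subseteq> carrier_vec n" and "set ws \<subseteq> carrier_vec n"
  shows "corthogonal (us @ ws)"
proof -
  have us: "distinct us" "\<forall>x\<in>set us. \<forall>y\<in>set us. x \<bullet> y = 0 \<longleftrightarrow> x \<noteq> y"
    using assms(1) unfolding corthogonal_iff_distinct by simp_all
  have ws: "distinct ws" "\<forall>x\<in>set ws. \<forall>y\<in>set ws. x \<bullet> y = 0 \<longleftrightarrow> x \<noteq> y"
    using assms(2) unfolding corthogonal_iff_distinct by simp_all
  have cross': "w \<bullet> u = 0" if "u \<in> set us" "w \<in> set ws" for u w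
    using cross that assms(4,5) comm_scalar_prod[of u n w] by auto
  have "set us \<inter> set ws = {}"
  proof (rule ccontr)
    assume "set us \<inter> set ws \<noteq> {}"
    then obtain x where "x \<in> set us" "x \<in> set ws"
      by blast
    then show False
      using cross us(2) by metis
  qed
  then show ?thesis
    unfolding corthogonal_iff_distinct using us ws cross cross' by auto
qed

lemma corthogonal_transpose_mult_vec_eq_zero:
  fixes vs xs ys :: "real vec list"
  assumes "corthogonal vs" and "set vs \<subseteq> carrier_vec n"
    and "set xs \<subseteq> set vs" and "set ys \<subseteq> set vs" and "set xs \<inter> set ys = {}"
    and c: "c \<in> carrier_vec (length ys)"
  shows "transpose_mat (mat_of_cols n xs) *\<^sub>v (mat_of_cols n ys *\<^sub>v c) = 0\<^sub>v (length xs)"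
proof -
  have Xt: "transpose_mat (mat_of_cols n xs) \<in> carrier_mat (length xs) n"
    by simp
  have prod: "transpose_mat (mat_of_cols n xs) * mat_of_cols n ys = 0\<^sub>m (length xs) (length ys)"
  proof (rule eq_matI)
    fix i j
    assume "i < dim_row (0\<^sub>m (length xs) (length ys) :: real mat)"
      and "j < dim_col (0\<^sub>m (length xs) (length ys) :: real mat)"
    then have i: "i < length xs" and j: "j < length ys" by auto
    have x: "xs ! i \<in> set vs" and y: "ys ! j \<in> set vs"
      using nth_mem[OF i] nth_mem[OF j] assms(3,4) by auto
    have "xs ! i \<noteq> ys ! j"
      using nth_mem[OF i] nth_mem[OF j] assms(5) by auto
    then have "xs ! i \<bullet> ys ! j = 0"
      using assms(1) x y unfolding corthogonal_iff_distinct by simp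
    moreover have "xs ! i \<in> carrier_vec n" "ys ! j \<in> carrier_vec n"
      using x y assms(2) by auto
    ultimately show "(transpose_mat (mat_of_cols n xs) * mat_of_cols n ys) $$ (i, j)
        = 0\<^sub>m (length xs) (length ys) $$ (i, j)"
      using i j by simp
  qed auto
  then show ?thesis
    using assoc_mult_mat_vec[OF Xt mat_of_cols_carrier(1) c] zero_mult_mat_vec[OF c] by simp
qed

lemma corthogonal_mult_vec_eq_zero:
  fixes vs :: "'a :: conjugatable_field vec list"
  assumes "corthogonal vs" and "set vs \<subseteq> carrier_vec n"
    and c: "c \<in> carrier_vec (length vs)" and Vc: "mat_of_cols n vs *\<^sub>v c = 0\<^sub>v n"
  shows "c = 0\<^sub>v (length vs)"
proof -
  define L where "L = mat_of_rows n (map vec_inv vs)"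
  have L: "L \<in> carrier_mat (length vs) n"
    unfolding L_def using mat_of_rows_carrier(1)[of n "map vec_inv vs"] by simp
  have LV: "L * mat_of_cols n vs = 1\<^sub>m (length vs)"
    using corthogonal_inv[OF assms(1,2)] unfolding inverts_mat_def L_def by simp
  have "c = (L * mat_of_cols n vs) *\<^sub>v c"
    using c unfolding LV by simp
  also have "\<dots> = L *\<^sub>v 0\<^sub>v n"
    using assoc_mult_mat_vec[OF L mat_of_cols_carrier(1) c] Vc by simp
  also have "\<dots> = 0\<^sub>v (length vs)"
    by (rule mult_mat_vec_zero[OF L])
  finally show ?thesis .
qed

lemma (in vec_space) transpose_mult_vec_eq_zero_iff:
  assumes A: "A \<in> carrier_mat n k" and x: "x \<in> carrier_vec n"
  shows "transpose_mat A *\<^sub>v x = 0\<^sub>v k \<longleftrightarrow> (\<forall>v\<in>col_space A. v \<bullet> x = 0)"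
proof
  assume Ax: "transpose_mat A *\<^sub>v x = 0\<^sub>v k"
  show "\<forall>v\<in>col_space A. v \<bullet> x = 0"
  proof
    fix v
    assume "v \<in> col_space A"
    then obtain y where y: "y \<in> carrier_vec k" and v: "v = A *\<^sub>v y"
      using col_space_eq[OF A] A by auto
    have "v \<bullet> x = x \<bullet> (A *\<^sub>v y)"
      using v A x y by (simp add: comm_scalar_prod[of _ n])
    also have "\<dots> = (transpose_mat A *\<^sub>v x) \<bullet> y"
      using transpose_vec_mult_scalar[OF A y x] by simp
    finally show "v \<bullet> x = 0"
      using Ax y by simp
  qed
next
  assume orth: "\<forall>v\<in>col_space A. v \<bullet> x = 0"
  show "transpose_mat A *\<^sub>v x = 0\<^sub>v k"
  proof (rule eq_vecI)
    fix i
    assume "i < dim_vec (0\<^sub>v k :: 'a vec)"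
    then have i: "i < k" by simp
    have "col A i \<in> set (cols A)"
      using A i by (simp add: cols_def)
    then have "col A i \<in> col_space A"
      unfolding col_space_def using A cols_dim in_own_span by blast
    then show "(transpose_mat A *\<^sub>v x) $ i = 0\<^sub>v k $ i"
      using orth A i by simp
  qed (use A in simp)
qed

lemma transpose_mult_vec_self_eq_zero:
  fixes C :: "real mat"
  assumes C: "C \<in> carrier_mat n k" and y: "y \<in> carrier_vec k"
    and "transpose_mat C *\<^sub>v (C *\<^sub>v y) = 0\<^sub>v k"
  shows "C *\<^sub>v y = 0\<^sub>v n"
proof -
  have "(C *\<^sub>v y) \<bullet> (C *\<^sub>v y) = (transpose_mat C *\<^sub>v (C *\<^sub>v y)) \<bullet> y"
    using transpose_vec_mult_scalar[OF C y, of "C *\<^sub>v y"] C y by (simp add: comm_scalar_prod[of _ k])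
  also have "\<dots> = 0"
    using assms(3) y by simp
  finally show ?thesis
    using conjugate_square_eq_0_vec[OF mult_mat_vec_carrier[OF C y]] by simp
qed

lemma mult_eq_zero_orthogonal_ranges:
  fixes A B :: "'a :: comm_semiring_0 mat"
  assumes A: "A \<in> carrier_mat m n" and B: "B \<in> carrier_mat n p" and AB: "A * B = 0\<^sub>m m p"
    and y: "y \<in> carrier_vec m" and z: "z \<in> carrier_vec p"
  shows "(transpose_mat A *\<^sub>v y) \<bullet> (B *\<^sub>v z) = 0"
proof -
  have "(transpose_mat A *\<^sub>v y) \<bullet> (B *\<^sub>v z) = y \<bullet> ((A * B) *\<^sub>v z)"
    using transpose_vec_mult_scalar[OF A mult_mat_vec_carrier[OF B z] y] assoc_mult_mat_vec[OF A B z]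
    by simp
  also have "\<dots> = 0"
    unfolding AB zero_mult_mat_vec[OF z] using y by (rule scalar_prod_right_zero)
  finally show ?thesis .
qed

lemma (in vec_space) col_space_eq_image:
  assumes "A \<in> carrier_mat n k"
  shows "col_space A = (\<lambda>y. A *\<^sub>v y) ` carrier_vec k"
  using col_space_eq[OF assms] assms by auto

context cof_vec_space
begin

lemma subset_span_maximal_lin_indpt:
  assumes S: "S \<subseteq> carrier_vec n" and U: "maximal U (\<lambda>T. T \<subseteq> S \<and> lin_indpt T)"
  shows "S \<subseteq> span U"
proof
  fix s
  assume s: "s \<in> S"
  from U have "U \<subseteq> S" "lin_indpt U" and max: "\<And>B. U \<subseteq> B \<Longrightarrow> B \<subseteq> S \<Longrightarrow> lin_indpt B \<Longrightarrow> B = U"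
    unfolding maximal_def by auto
  then have Uc: "U \<subseteq> carrier_vec n"
    using S by auto
  show "s \<in> span U"
  proof (rule ccontr)
    assume "s \<notin> span U"
    then have "s \<notin> U"
      using in_own_span[OF Uc] by auto
    then have "lin_indpt (insert s U)"
      using lin_dep_iff_in_span[OF Uc \<open>lin_indpt U\<close>] \<open>s \<notin> span U\<close> s S by auto
    then have "insert s U = U"
      using max \<open>U \<subseteq> S\<close> s by blast
    then show False
      using \<open>s \<notin> U\<close> by auto
  qed
qed

lemma corthogonal_lin_indpt:
  fixes ws :: "'a vec list"
  assumes "corthogonal ws" and ws: "set ws \<subseteq> carrier_vec n"
  shows "lin_indpt (set ws)"
proof
  assume "lin_dep (set ws)"
  moreover have "cols (mat_of_cols n ws) = ws"
    using ws by (rule cols_mat_of_cols)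
  ultimately obtain c where "c \<in> carrier_vec (length ws)" "c \<noteq> 0\<^sub>v (length ws)"
    and "mat_of_cols n ws *\<^sub>v c = 0\<^sub>v n"
    using lin_depE[OF mat_of_cols_carrier(1)] corthogonal_distinct[OF assms(1)] by metis
  then show False
    using corthogonal_mult_vec_eq_zero[OF assms] by blast
qed

lemma corthogonal_basis_of_col_space:
  assumes A: "A \<in> carrier_mat n k"
  obtains us where "set us \<subseteq> carrier_vec n" "corthogonal us" "length us = rank A"
    "span (set us) = col_space A"
proof -
  have cols: "set (cols A) \<subseteq> carrier_vec n"
    using A cols_dim by blast
  obtain S where S: "maximal S (\<lambda>T. T \<subseteq> set (cols A) \<and> lin_indpt T)"
    using maximal_exists[of "\<lambda>T. T \<subseteq> set (cols A) \<and> lin_indpt T" "card (set (cols A))" "{}"]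
    by (meson List.finite_set card_mono empty_iff empty_subsetI finite_lin_indpt2 rev_finite_subset)
  then have "S \<subseteq> set (cols A)" "lin_indpt S"
    unfolding maximal_def by auto
  then have Sc: "S \<subseteq> carrier_vec n" and "finite S"
    using cols finite_subset by auto
  have "span S = col_space A"
    unfolding col_space_def
    using span_is_monotone[OF \<open>S \<subseteq> set (cols A)\<close>] span_subsetI[OF Sc subset_span_maximal_lin_indpt[OF cols S]]
    by blast
  obtain xs where xs: "set xs = S" "distinct xs"
    using finite_distinct_list[OF \<open>finite S\<close>] by blast
  define us where "us = gram_schmidt n xs"
  have "set xs \<subseteq> carrier_vec n" "\<not> lin_dep (set xs)"
    using xs Sc \<open>lin_indpt S\<close> by auto
  note gs = gram_schmidt_result[OF this(1) xs(2) this(2) us_def]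
  show thesis
  proof (rule that)
    show "set us \<subseteq> carrier_vec n" "corthogonal us"
      using gs by auto
    show "length us = rank A"
      using gs(4) rank_card_indpt[OF A S] xs distinct_card by metis
    show "span (set us) = col_space A"
      using gs(1) xs(1) \<open>span S = col_space A\<close> by simp
  qed
qed

lemma corthogonal_basis_extension:
  fixes ws :: "'a vec list"
  assumes ws: "set ws \<subseteq> carrier_vec n" and "corthogonal ws"
  obtains hs where "set hs \<subseteq> carrier_vec n" "corthogonal (ws @ hs)" "length (ws @ hs) = n"
proof -
  define S where "S = set ws \<union> set (unit_vecs n)"
  have Sc: "S \<subseteq> carrier_vec n"
    unfolding S_def using ws unit_vecs_carrier by auto
  obtain T where "finite T" and T: "maximal T (\<lambda>T. T \<subseteq> S \<and> lin_indpt T)" and "set ws \<subseteq> T"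
    using maximal_exists_superset[of S "\<lambda>T. T \<subseteq> S \<and> lin_indpt T" "set ws"]
      corthogonal_lin_indpt[OF assms(2) ws] unfolding S_def by auto
  then have "T \<subseteq> S" "lin_indpt T"
    unfolding maximal_def by auto
  then have Tc: "T \<subseteq> carrier_vec n"
    using Sc by auto
  have "carrier_vec n \<subseteq> span T"
    using span_unit_vecs_is_carrier span_subsetI[OF Tc] subset_span_maximal_lin_indpt[OF Sc T]
    unfolding S_def by auto
  then have "basis T"
    unfolding basis_def using Tc \<open>lin_indpt T\<close> span_closed[OF Tc] by auto
  then have "card T = n"
    using dim_basis[OF \<open>finite T\<close>] dim_is_n by simp
  obtain es where es: "set es = T - set ws" "distinct es"
    using finite_distinct_list[of "T - set ws"] \<open>finite T\<close> by blast
  have "set es \<subseteq> carrier_vec n" "distinct (ws @ es)" "\<not> lin_dep (set (ws @ es))"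
    using es Tc \<open>set ws \<subseteq> T\<close> \<open>lin_indpt T\<close> corthogonal_distinct[OF assms(2)]
    by (auto simp: Un_absorb1)
  note gs = gram_schmidt_sub_result[OF refl this(1) ws this(2,3) assms(2)]
  define hs where "hs = gram_schmidt_sub2 n ws es"
  have rev_gs: "rev (gram_schmidt_sub n ws es) = rev ws @ hs"
    unfolding hs_def by (rule gram_schmidt_sub_eq)
  show thesis
  proof (rule that)
    have "set (ws @ hs) = set (gram_schmidt_sub n ws es)"
      using arg_cong[OF rev_gs, of set] by auto
    then show "set hs \<subseteq> carrier_vec n"
      using gs by auto
    have "distinct (ws @ hs)"
      using gs arg_cong[OF rev_gs, of distinct] by auto
    then show "corthogonal (ws @ hs)"
      using corthogonal_sort gs \<open>set (ws @ hs) = set (gram_schmidt_sub n ws es)\<close> by metis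
    have "length (ws @ es) = card T"
      using distinct_card[OF \<open>distinct (ws @ es)\<close>] es \<open>set ws \<subseteq> T\<close> by (simp add: Un_absorb1)
    then show "length (ws @ hs) = n"
      using gs arg_cong[OF rev_gs, of length] \<open>card T = n\<close> by simp
  qed
qed

end

lemma transpose_mult_vec_eq_zero_iff_col_space_eq:
  assumes A: "A \<in> carrier_mat n k" and C: "C \<in> carrier_mat n l"
    and eq: "vec_space.col_space n A = vec_space.col_space n C" and x: "x \<in> carrier_vec n"
  shows "transpose_mat A *\<^sub>v x = 0\<^sub>v k \<longleftrightarrow> transpose_mat C *\<^sub>v x = (0\<^sub>v l :: 'a :: field vec)"
  using vec_space.transpose_mult_vec_eq_zero_iff[OF A x] vec_space.transpose_mult_vec_eq_zero_iff[OF C x] eq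
  by simp

lemma inj_on_transpose_mult_col_space_eq:
  fixes A C :: "real mat"
  assumes A: "A \<in> carrier_mat n k" and C: "C \<in> carrier_mat n l"
    and eq: "vec_space.col_space n A = vec_space.col_space n C"
    and C_inj: "\<And>d. d \<in> carrier_vec l \<Longrightarrow> C *\<^sub>v d = 0\<^sub>v n \<Longrightarrow> d = 0\<^sub>v l"
  shows "inj_on (\<lambda>c. transpose_mat A *\<^sub>v (C *\<^sub>v c)) (carrier_vec l)"
proof (rule inj_onI)
  fix c c'
  assume c: "c \<in> carrier_vec l" and c': "c' \<in> carrier_vec l"
    and same: "transpose_mat A *\<^sub>v (C *\<^sub>v c) = transpose_mat A *\<^sub>v (C *\<^sub>v c')"
  have At: "transpose_mat A \<in> carrier_mat k n"
    using A by simp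
  have "transpose_mat A *\<^sub>v (C *\<^sub>v (c - c')) = 0\<^sub>v k"
    using same c c' C At by (simp add: mult_minus_distrib_mat_vec[OF C] mult_minus_distrib_mat_vec[OF At])
  then have "transpose_mat C *\<^sub>v (C *\<^sub>v (c - c')) = 0\<^sub>v l"
    using transpose_mult_vec_eq_zero_iff_col_space_eq[OF A C eq] C c c' by simp
  then have "C *\<^sub>v (c - c') = 0\<^sub>v n"
    using transpose_mult_vec_self_eq_zero[OF C] c c' by simp
  then have "c - c' = 0\<^sub>v l"
    using C_inj c c' by simp
  show "c = c'"
  proof (rule eq_vecI)
    fix i
    assume "i < dim_vec c'"
    then have "(c - c') $ i = 0"
      using \<open>c - c' = 0\<^sub>v l\<close> c' by simp
    then show "c $ i = c' $ i"
      using \<open>i < dim_vec c'\<close> c c' by simp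
  qed (use c c' in simp)
qed

locale hodge_frame =
  fixes m N p :: nat and Bd Bd1 :: "real mat" and us ws hs :: "real vec list"
  assumes Bd_carrier: "Bd \<in> carrier_mat m N" and Bd1_carrier: "Bd1 \<in> carrier_mat N p"
    and frame_carrier: "set (us @ ws @ hs) \<subseteq> carrier_vec N"
    and frame_corthogonal: "corthogonal (us @ ws @ hs)"
    and frame_length: "length (us @ ws @ hs) = N"
    and col_space_down: "vec_space.col_space N (mat_of_cols N us) = vec_space.col_space N (transpose_mat Bd)"
    and col_space_up: "vec_space.col_space N (mat_of_cols N ws) = vec_space.col_space N Bd1"
begin

abbreviation "U \<equiv> mat_of_cols N us"
abbreviation "W \<equiv> mat_of_cols N ws"
abbreviation "Z \<equiv> mat_of_cols N hs"

definition "frame = mat_of_cols N (us @ ws @ hs)"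
text \<open>The rows \<open>v / (v \<bullet> v)\<close> invert a matrix with orthogonal columns \<open>v\<close>.\<close>
definition "frame_inv = mat_of_rows N (map vec_inv (us @ ws @ hs))"

lemma frame_carrier_mat: "frame \<in> carrier_mat N N" and frame_inv_carrier_mat: "frame_inv \<in> carrier_mat N N"
  unfolding frame_def frame_inv_def using frame_length by auto

lemma frame_inv_mult_frame: "frame_inv * frame = 1\<^sub>m N"
  using corthogonal_inv[OF frame_corthogonal frame_carrier] frame_length
  unfolding inverts_mat_def frame_def frame_inv_def by simp

lemma frame_mult_frame_inv: "frame * frame_inv = 1\<^sub>m N"
  using mat_mult_left_right_inverse[OF frame_inv_carrier_mat frame_carrier_mat frame_inv_mult_frame] .

lemma frame_mult_blocks:
  assumes a: "a \<in> carrier_vec (length us)" and b: "b \<in> carrier_vec (length ws)"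
    and c: "c \<in> carrier_vec (length hs)"
  shows "frame *\<^sub>v (a @\<^sub>v b @\<^sub>v c) = U *\<^sub>v a + W *\<^sub>v b + Z *\<^sub>v c"
proof -
  have "frame *\<^sub>v (a @\<^sub>v b @\<^sub>v c) = U *\<^sub>v a + (W *\<^sub>v b + Z *\<^sub>v c)"
    unfolding frame_def using assms
    by (simp add: mat_of_cols_append_mult_vec[of a us "b @\<^sub>v c" "ws @ hs"] mat_of_cols_append_mult_vec)
  then show ?thesis
    by (simp add: assoc_add_vec[of "U *\<^sub>v a" N])
qed

lemma frame_inv_mult_blocks:
  assumes a: "a \<in> carrier_vec (length us)" and b: "b \<in> carrier_vec (length ws)"
  shows "frame_inv *\<^sub>v (U *\<^sub>v a + W *\<^sub>v b) = a @\<^sub>v b @\<^sub>v 0\<^sub>v (length hs)"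
proof -
  have "Z *\<^sub>v 0\<^sub>v (length hs) = 0\<^sub>v N"
    by (rule mult_mat_vec_zero) simp
  moreover have "U *\<^sub>v a + W *\<^sub>v b \<in> carrier_vec N"
    by simp
  ultimately have "U *\<^sub>v a + W *\<^sub>v b = frame *\<^sub>v (a @\<^sub>v b @\<^sub>v 0\<^sub>v (length hs))"
    using frame_mult_blocks[OF a b zero_carrier_vec] by simp
  also have "frame_inv *\<^sub>v \<dots> = a @\<^sub>v b @\<^sub>v 0\<^sub>v (length hs)"
  proof -
    have x: "a @\<^sub>v b @\<^sub>v 0\<^sub>v (length hs) \<in> carrier_vec N"
      using a b frame_length by (intro carrier_vecI) simp
    show ?thesis
      using assoc_mult_mat_vec[OF frame_inv_carrier_mat frame_carrier_mat x] frame_inv_mult_frame x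
      by simp
  qed
  finally show ?thesis .
qed

lemma Bd_mult_frame:
  assumes a: "a \<in> carrier_vec (length us)" and b: "b \<in> carrier_vec (length ws)"
    and c: "c \<in> carrier_vec (length hs)"
  shows "Bd *\<^sub>v (frame *\<^sub>v (a @\<^sub>v b @\<^sub>v c)) = Bd *\<^sub>v (U *\<^sub>v a)"
proof -
  let ?r = "mat_of_cols N (ws @ hs) *\<^sub>v (b @\<^sub>v c)"
  have "frame *\<^sub>v (a @\<^sub>v b @\<^sub>v c) = U *\<^sub>v a + ?r"
    unfolding frame_def using a b c by (simp add: mat_of_cols_append_mult_vec)
  moreover have "transpose_mat U *\<^sub>v ?r = 0\<^sub>v (length us)"
    using corthogonal_transpose_mult_vec_eq_zero[OF frame_corthogonal frame_carrier, of us "ws @ hs"]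
      distinct_append corthogonal_distinct[OF frame_corthogonal] b c by auto
  then have "Bd *\<^sub>v ?r = 0\<^sub>v m"
    using transpose_mult_vec_eq_zero_iff_col_space_eq[of "transpose_mat Bd" N m U "length us" ?r]
      col_space_down Bd_carrier by simp
  ultimately show ?thesis
    using Bd_carrier a b c by (simp add: mult_add_distrib_mat_vec[OF Bd_carrier])
qed

lemma corthogonal_down: "corthogonal us" and corthogonal_up: "corthogonal ws"
  using frame_corthogonal unfolding corthogonal_iff_distinct by auto

lemma transpose_Bd1_mult_frame:
  assumes a: "a \<in> carrier_vec (length us)" and b: "b \<in> carrier_vec (length ws)"
    and c: "c \<in> carrier_vec (length hs)"
  shows "transpose_mat Bd1 *\<^sub>v (frame *\<^sub>v (a @\<^sub>v b @\<^sub>v c)) = transpose_mat Bd1 *\<^sub>v (W *\<^sub>v b)"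
proof -
  let ?r = "mat_of_cols N (us @ hs) *\<^sub>v (a @\<^sub>v c)"
  have "frame *\<^sub>v (a @\<^sub>v b @\<^sub>v c) = (W *\<^sub>v b + U *\<^sub>v a) + Z *\<^sub>v c"
    using frame_mult_blocks[OF a b c] comm_add_vec[of "U *\<^sub>v a" N "W *\<^sub>v b"] by simp
  also have "\<dots> = W *\<^sub>v b + ?r"
    using a c by (simp add: mat_of_cols_append_mult_vec assoc_add_vec[of "W *\<^sub>v b" N])
  finally have split: "frame *\<^sub>v (a @\<^sub>v b @\<^sub>v c) = W *\<^sub>v b + ?r" .
  have "transpose_mat W *\<^sub>v ?r = 0\<^sub>v (length ws)"
    using corthogonal_transpose_mult_vec_eq_zero[OF frame_corthogonal frame_carrier, of ws "us @ hs"]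
      distinct_append corthogonal_distinct[OF frame_corthogonal] a c by auto
  then have "transpose_mat Bd1 *\<^sub>v ?r = 0\<^sub>v p"
    using transpose_mult_vec_eq_zero_iff_col_space_eq[of Bd1 N p W "length ws" ?r]
      col_space_up Bd1_carrier by simp
  then show ?thesis
    unfolding split using Bd1_carrier by (simp add: mult_add_distrib_mat_vec[of _ p N])
qed

lemma inj_on_down: "inj_on (\<lambda>a. Bd *\<^sub>v (U *\<^sub>v a)) (carrier_vec (length us))"
proof -
  have "set us \<subseteq> carrier_vec N"
    using frame_carrier by simp
  then have "d = 0\<^sub>v (length us)" if "d \<in> carrier_vec (length us)" "U *\<^sub>v d = 0\<^sub>v N" for d
    using corthogonal_mult_vec_eq_zero[OF corthogonal_down] that by blast
  then show ?thesis
    using inj_on_transpose_mult_col_space_eq[of "transpose_mat Bd" N m U "length us"]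
      Bd_carrier col_space_down by simp
qed

lemma inj_on_up: "inj_on (\<lambda>b. transpose_mat Bd1 *\<^sub>v (W *\<^sub>v b)) (carrier_vec (length ws))"
proof -
  have "set ws \<subseteq> carrier_vec N"
    using frame_carrier by simp
  then have "d = 0\<^sub>v (length ws)" if "d \<in> carrier_vec (length ws)" "W *\<^sub>v d = 0\<^sub>v N" for d
    using corthogonal_mult_vec_eq_zero[OF corthogonal_up] that by blast
  then show ?thesis
    using inj_on_transpose_mult_col_space_eq[of Bd1 N p W "length ws"] Bd1_carrier col_space_up by simp
qed

lemma image_down: "(\<lambda>z. transpose_mat Bd *\<^sub>v z) ` carrier_vec m = (\<lambda>a. U *\<^sub>v a) ` carrier_vec (length us)"
  using vec_space.col_space_eq_image[of "transpose_mat Bd" N m]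
    vec_space.col_space_eq_image[of U N "length us"] col_space_down Bd_carrier by simp

lemma image_up: "(\<lambda>z. Bd1 *\<^sub>v z) ` carrier_vec p = (\<lambda>b. W *\<^sub>v b) ` carrier_vec (length ws)"
  using vec_space.col_space_eq_image[of Bd1 N p]
    vec_space.col_space_eq_image[of W N "length ws"] col_space_up Bd1_carrier by simp

lemma hodge_field_frame:
  assumes a: "a \<in> carrier_vec (length us)" and b: "b \<in> carrier_vec (length ws)"
    and c: "c \<in> carrier_vec (length hs)"
  shows "hodge_field Bd Bd1 Fd Fu (frame *\<^sub>v (a @\<^sub>v b @\<^sub>v c))
    = transpose_mat Bd *\<^sub>v Fd (Bd *\<^sub>v (U *\<^sub>v a)) + Bd1 *\<^sub>v Fu (transpose_mat Bd1 *\<^sub>v (W *\<^sub>v b))"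
  unfolding hodge_field_def Bd_mult_frame[OF assms] transpose_Bd1_mult_frame[OF assms] ..

lemma hodge_field_carrier: "hodge_field Bd Bd1 Fd Fu x \<in> carrier_vec N"
  using Bd1_carrier unfolding hodge_field_def by (intro carrier_vecI) simp

lemma hodge_field_conjugate_ab_vector_field:
  assumes Fd: "\<forall>y\<in>carrier_vec m. Fd y \<in> carrier_vec m"
    and Fu: "\<forall>z\<in>carrier_vec p. Fu z \<in> carrier_vec p"
  shows "\<exists>H. ab_vector_field (length us) (length ws) N H \<and> conjugate_vf N (hodge_field Bd Bd1 Fd Fu) N H"
proof -
  let ?G = "hodge_field Bd Bd1 Fd Fu"
  have "\<forall>a\<in>carrier_vec (length us). Fd (Bd *\<^sub>v (U *\<^sub>v a)) \<in> carrier_vec m"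
    using Fd mult_mat_vec_carrier[OF Bd_carrier mat_of_cols_mult_vec_carrier] by blast
  from image_eq_choice[OF image_down this]
  obtain H1 where H1: "\<forall>a\<in>carrier_vec (length us). H1 a \<in> carrier_vec (length us)
      \<and> transpose_mat Bd *\<^sub>v Fd (Bd *\<^sub>v (U *\<^sub>v a)) = U *\<^sub>v H1 a"
    by blast
  have "\<forall>b\<in>carrier_vec (length ws). Fu (transpose_mat Bd1 *\<^sub>v (W *\<^sub>v b)) \<in> carrier_vec p"
    using Fu mult_mat_vec_carrier[of "transpose_mat Bd1" p N, OF _ mat_of_cols_mult_vec_carrier]
      Bd1_carrier by simp
  from image_eq_choice[OF image_up this]
  obtain H2 where H2: "\<forall>b\<in>carrier_vec (length ws). H2 b \<in> carrier_vec (length ws)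
      \<and> Bd1 *\<^sub>v Fu (transpose_mat Bd1 *\<^sub>v (W *\<^sub>v b)) = W *\<^sub>v H2 b"
    by blast
  define H where "H x = frame_inv *\<^sub>v ?G (frame *\<^sub>v x)" for x
  have blocks: "H (a @\<^sub>v b @\<^sub>v c) = H1 a @\<^sub>v H2 b @\<^sub>v 0\<^sub>v (length hs)"
    if "a \<in> carrier_vec (length us)" "b \<in> carrier_vec (length ws)" "c \<in> carrier_vec (length hs)" for a b c
    unfolding H_def hodge_field_frame[OF that] using that H1 H2 frame_inv_mult_blocks by simp
  have "length us + length ws \<le> N" and hs: "N - length us - length ws = length hs"
    using frame_length by auto
  then have "ab_vector_field (length us) (length ws) N H"
    unfolding ab_vector_field_iff_blocks hs
    by (intro conjI exI[of _ H1] exI[of _ H2] ballI) (simp_all add: H1 H2 blocks)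
  moreover have "conjugate_vf N H N ?G"
    unfolding conjugate_vf_def H_def
    using frame_carrier_mat frame_inv_carrier_mat frame_mult_frame_inv frame_inv_mult_frame by blast
  then have "conjugate_vf N ?G N H"
    using conjugate_vf_sym hodge_field_carrier by blast
  ultimately show ?thesis
    by blast
qed

lemma ab_vector_field_conjugate_hodge_field:
  assumes "ab_vector_field (length us) (length ws) N H"
  shows "\<exists>Fd Fu. (\<forall>y\<in>carrier_vec m. Fd y \<in> carrier_vec m) \<and> (\<forall>z\<in>carrier_vec p. Fu z \<in> carrier_vec p)
    \<and> conjugate_vf N H N (hodge_field Bd Bd1 Fd Fu)"
proof -
  have le: "length us + length ws \<le> N" and hs: "N - length us - length ws = length hs"
    using frame_length by auto
  obtain H1 H2 where H1: "\<forall>a\<in>carrier_vec (length us). H1 a \<in> carrier_vec (length us)"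
    and H2: "\<forall>b\<in>carrier_vec (length ws). H2 b \<in> carrier_vec (length ws)"
    and H: "\<forall>a\<in>carrier_vec (length us). \<forall>b\<in>carrier_vec (length ws). \<forall>c\<in>carrier_vec (length hs).
      H (a @\<^sub>v b @\<^sub>v c) = H1 a @\<^sub>v H2 b @\<^sub>v 0\<^sub>v (length hs)"
    using assms unfolding ab_vector_field_iff_blocks hs by blast
  from image_eq_choice[OF image_down[symmetric] H1]
  obtain z1 where z1: "\<forall>a\<in>carrier_vec (length us). z1 a \<in> carrier_vec m
      \<and> U *\<^sub>v H1 a = transpose_mat Bd *\<^sub>v z1 a"
    by blast
  from inj_on_factor[OF inj_on_down _ zero_carrier_vec, of z1] z1
  obtain Fd where Fd: "\<forall>y. Fd y \<in> carrier_vec m"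
    and Fd_eq: "\<forall>a\<in>carrier_vec (length us). Fd (Bd *\<^sub>v (U *\<^sub>v a)) = z1 a"
    by blast
  from image_eq_choice[OF image_up[symmetric] H2]
  obtain z2 where z2: "\<forall>b\<in>carrier_vec (length ws). z2 b \<in> carrier_vec p
      \<and> W *\<^sub>v H2 b = Bd1 *\<^sub>v z2 b"
    by blast
  from inj_on_factor[OF inj_on_up _ zero_carrier_vec, of z2] z2
  obtain Fu where Fu: "\<forall>z. Fu z \<in> carrier_vec p"
    and Fu_eq: "\<forall>b\<in>carrier_vec (length ws). Fu (transpose_mat Bd1 *\<^sub>v (W *\<^sub>v b)) = z2 b"
    by blast
  have "\<forall>x\<in>carrier_vec N. H x = frame_inv *\<^sub>v hodge_field Bd Bd1 Fd Fu (frame *\<^sub>v x)"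
    unfolding all_carrier_vec_blocks[OF le] hs
  proof (intro ballI)
    fix a b c :: "real vec"
    assume a: "a \<in> carrier_vec (length us)" and b: "b \<in> carrier_vec (length ws)"
      and c: "c \<in> carrier_vec (length hs)"
    have "hodge_field Bd Bd1 Fd Fu (frame *\<^sub>v (a @\<^sub>v b @\<^sub>v c)) = U *\<^sub>v H1 a + W *\<^sub>v H2 b"
      unfolding hodge_field_frame[OF a b c] using Fd_eq Fu_eq z1 z2 a b by simp
    then show "H (a @\<^sub>v b @\<^sub>v c) = frame_inv *\<^sub>v hodge_field Bd Bd1 Fd Fu (frame *\<^sub>v (a @\<^sub>v b @\<^sub>v c))"
      using frame_inv_mult_blocks H1 H2 H a b c by simp
  qed
  then have "conjugate_vf N H N (hodge_field Bd Bd1 Fd Fu)"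
    unfolding conjugate_vf_def
    using frame_carrier_mat frame_inv_carrier_mat frame_mult_frame_inv frame_inv_mult_frame by blast
  then show ?thesis
    using Fd Fu by blast
qed

end

lemma hodge_frame_exists:
  fixes Bd Bd1 :: "real mat"
  assumes Bd: "Bd \<in> carrier_mat m N" and Bd1: "Bd1 \<in> carrier_mat N p" and "Bd * Bd1 = 0\<^sub>m m p"
  obtains us ws hs where "hodge_frame m N p Bd Bd1 us ws hs"
    and "length us = dim_im (transpose_mat Bd)" and "length ws = dim_im Bd1"
proof -
  interpret V: cof_vec_space N "TYPE(real)" .
  have BdT: "transpose_mat Bd \<in> carrier_mat N m"
    using Bd by simp
  obtain us where us: "set us \<subseteq> carrier_vec N" "corthogonal us" "length us = V.rank (transpose_mat Bd)"
    "V.span (set us) = V.col_space (transpose_mat Bd)"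
    using V.corthogonal_basis_of_col_space[OF BdT] by blast
  obtain ws where ws: "set ws \<subseteq> carrier_vec N" "corthogonal ws" "length ws = V.rank Bd1"
    "V.span (set ws) = V.col_space Bd1"
    using V.corthogonal_basis_of_col_space[OF Bd1] by blast
  have "u \<bullet> w = 0" if "u \<in> set us" "w \<in> set ws" for u w
  proof -
    have "u \<in> V.col_space (transpose_mat Bd)" "w \<in> V.col_space Bd1"
      using V.span_mem[OF us(1) that(1)] V.span_mem[OF ws(1) that(2)] us(4) ws(4) by auto
    then show ?thesis
      unfolding V.col_space_eq_image[OF BdT] V.col_space_eq_image[OF Bd1]
      using mult_eq_zero_orthogonal_ranges[OF Bd Bd1 \<open>Bd * Bd1 = 0\<^sub>m m p\<close>] by blast
  qed
  then have "corthogonal (us @ ws)"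
    using corthogonal_append us ws by blast
  then obtain hs where hs: "set hs \<subseteq> carrier_vec N" "corthogonal ((us @ ws) @ hs)"
    "length ((us @ ws) @ hs) = N"
    using V.corthogonal_basis_extension[of "us @ ws"] us ws by auto
  have "V.col_space (mat_of_cols N xs) = V.span (set xs)" if "set xs \<subseteq> carrier_vec N" for xs
    unfolding V.col_space_def using cols_mat_of_cols[OF that] by simp
  then have "hodge_frame m N p Bd Bd1 us ws hs"
    using Bd Bd1 us ws hs by unfold_locales auto
  moreover have "dim_im (transpose_mat Bd) = V.rank (transpose_mat Bd)" "dim_im Bd1 = V.rank Bd1"
    unfolding dim_im_def using Bd Bd1 by auto
  ultimately show thesis
    using that us ws by simp
qed

theorem mainTheorem1:
  fixes n d :: nat and X :: "nat set set"
    and Lm Ld Lp :: "nat set list"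
  assumes "simplicial_complex n X"
    and "distinct Lm" and "set Lm = simplices_card X d"
    and "distinct Ld" and "set Ld = simplices_card X (d + 1)"
    and "distinct Lp" and "set Lp = simplices_card X (d + 2)"
  defines "Bd \<equiv> boundary_matrix Lm Ld"
    and "Bd1 \<equiv> boundary_matrix Ld Lp"
  shows "(\<forall>Fdown Fup.
            (\<forall>y\<in>carrier_vec (length Lm). Fdown y \<in> carrier_vec (length Lm)) \<and>
            (\<forall>z\<in>carrier_vec (length Lp). Fup z \<in> carrier_vec (length Lp)) \<longrightarrow>
            (\<exists>H. ab_vector_field (dim_im (transpose_mat Bd)) (dim_im Bd1) (length Ld) H \<and>
                 conjugate_vf (length Ld) (hodge_field Bd Bd1 Fdown Fup) (length Ld) H))
       \<and>
         (\<forall>H. ab_vector_field (dim_im (transpose_mat Bd)) (dim_im Bd1) (length Ld) H \<longrightarrow>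
            (\<exists>Fdown Fup.
               (\<forall>y\<in>carrier_vec (length Lm). Fdown y \<in> carrier_vec (length Lm)) \<and>
               (\<forall>z\<in>carrier_vec (length Lp). Fup z \<in> carrier_vec (length Lp)) \<and>
               conjugate_vf (length Ld) H (length Ld) (hodge_field Bd Bd1 Fdown Fup)))"
proof -
  have carrier: "Bd \<in> carrier_mat (length Lm) (length Ld)" "Bd1 \<in> carrier_mat (length Ld) (length Lp)"
    unfolding Bd_def Bd1_def boundary_matrix_def by auto
  have "Bd * Bd1 = 0\<^sub>m (length Lm) (length Lp)"
    unfolding Bd_def Bd1_def using assms(1,4,5,7) by (rule boundary_matrix_mult_eq_zero)
  then obtain us ws hs where frame: "hodge_frame (length Lm) (length Ld) (length Lp) Bd Bd1 us ws hs"
    and ranks: "length us = dim_im (transpose_mat Bd)" "length ws = dim_im Bd1"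
    by (rule hodge_frame_exists[OF carrier])
  show ?thesis
    using hodge_frame.hodge_field_conjugate_ab_vector_field[OF frame]
      hodge_frame.ab_vector_field_conjugate_hodge_field[OF frame]
    unfolding ranks by blast
qed

end
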